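(* For every base $\mathscr{B}$, finite multisets of atoms $P=[p_1,\dots,p_n]$ and $S$, and atom $q$, the following are equivalent: (1) $P,S\vdash_{\mathscr{B}}q$; (2) for every base $\mathscr{X}\supseteq\mathscr{B}$ and all finite multisets of atoms $T_1,\dots,T_n$, if $T_i\vdash_{\mathscr{X}}p_i$ for all $i=1,\dots,n$, then $T_1,\dots,T_n,S\vdash_{\mathscr{X}}q$.
   Context: Fix a countably infinite set $\mathbb{A}$ of atoms; multisets are finite and "$,$" denotes multiset union. An atomic rule is $(P_1\triangleright p_1,\dots,P_n\triangleright p_n)\Rightarrow p$ ($n\ge0$) with $P_i$ finite multisets of atoms and $p_i,p$ atoms; a base is a set of atomic rules, and $\mathscr{X}\supseteq\mathscr{B}$ means $\mathscr{X}$ contains all rules of $\mathscr{B}$. Derivability $\vdash_{\mathscr{B}}$ is the least relation between finite multisets of atoms and atoms such that (Ref) $[p]\vdash_{\mathscr{B}}p$; (App) if $(P_1\triangleright p_1,\dots,P_n\triangleright p_n)\Rightarrow p\in\mathscr{B}$ and $S_i,P_i\vdash_{\mathscr{B}}p_i$ for $i=1,\dots,n$, then $S_1,\dots,S_n\vdash_{\mathscr{B}}p$. *)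

theory Defs
  imports Main "HOL-Library.Multiset"
begin

type_synonym atom = nat

text \<open>An atomic rule (P1 |> p1, ..., Pn |> pn) => p is a pair of the list of
  premises (Pi, pi) and the conclusion p.\<close>
type_synonym rule = "((atom multiset \<times> atom) list) \<times> atom"

type_synonym base = "rule set"

inductive derives :: "base \<Rightarrow> atom multiset \<Rightarrow> atom \<Rightarrow> bool" where
  Ref: "derives B {#p#} p"
| App: "\<lbrakk> (prems, p) \<in> B; length Ss = length prems;
          \<forall>i < length prems. derives B (Ss ! i + fst (prems ! i)) (snd (prems ! i)) \<rbrakk>
        \<Longrightarrow> derives B (sum_list Ss) p"

end

(* Soundness is monotonicity of derivability in the base together with admissibility
   of cut, which is proved by pushing the cut atom into the unique premise of the last
   rule application whose context contains it.  Completeness takes X = B and the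
   trivial derivations T_i = [p_i] given by (Ref). *)

theory Submission
  imports Defs
begin

lemma derives_mono: "derives B G q \<Longrightarrow> B \<subseteq> X \<Longrightarrow> derives X G q"
proof (induction rule: derives.induct)
  case (Ref B p)
  show ?case by (rule derives.Ref)
next
  case (App prems p B Ss)
  then show ?case by (intro derives.App) auto
qed

lemma sum_list_update_add:
  "j < length xs \<Longrightarrow> sum_list (xs[j := y]) + xs ! j = sum_list xs + (y :: 'a :: comm_monoid_add)"
proof (induction xs arbitrary: j)
  case (Cons x xs)
  then show ?case by (cases j) (simp_all add: ac_simps)
qed simp

lemma derives_cut:
  "derives X (add_mset p G) q \<Longrightarrow> derives X T p \<Longrightarrow> derives X (G + T) q"
proof (induction "add_mset p G" q arbitrary: p G T rule: derives.induct)
  case (Ref r)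
  then show ?case by simp
next
  case (App prems r X Ss)
  note IH = App.hyps(3)
  have "p \<in># sum_list Ss" using App.hyps(4) by simp
  then obtain j where j: "j < length Ss" "p \<in># Ss ! j"
    by (auto simp: in_set_conv_nth)
  \<comment> \<open>Cut inside the premise whose context share Ss ! j contains p.\<close>
  define Ss' where "Ss' = Ss[j := Ss ! j - {#p#} + T]"
  have "derives X (Ss' ! i + fst (prems ! i)) (snd (prems ! i))" if i: "i < length prems" for i
  proof (cases "i = j")
    case True
    have "Ss ! j + fst (prems ! j) = add_mset p (Ss ! j - {#p#} + fst (prems ! j))"
      using j(2) by simp
    then have "derives X (Ss ! j - {#p#} + fst (prems ! j) + T) (snd (prems ! j))"
      using IH i True App.prems by blast
    then show ?thesis using True j(1) by (simp add: Ss'_def ac_simps)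
  next
    case False
    then show ?thesis using IH i by (simp add: Ss'_def)
  qed
  then have "derives X (sum_list Ss') r"
    using App.hyps(1,2) by (intro derives.App) (auto simp: Ss'_def)
  moreover have "sum_list Ss' = G + T"
  proof -
    have "sum_list Ss' + Ss ! j = add_mset p G + (Ss ! j - {#p#} + T)"
      unfolding Ss'_def using j(1) App.hyps(4) by (simp add: sum_list_update_add)
    also have "\<dots> = G + T + Ss ! j"
      using j(2) by (simp add: insert_DiffM)
    finally show ?thesis by simp
  qed
  ultimately show ?case by simp
qed

lemma derives_cut_list:
  "list_all2 (derives X) Ts ps \<Longrightarrow> derives X (mset ps + S) q \<Longrightarrow> derives X (sum_list Ts + S) q"
proof (induction Ts ps arbitrary: S rule: list_all2_induct)
  case (Cons T Ts p ps)
  have "derives X (add_mset p (sum_list Ts + S)) q"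
    using Cons.IH[of "add_mset p S"] Cons.prems by simp
  then have "derives X (sum_list Ts + S + T) q"
    using Cons.hyps(1) by (rule derives_cut)
  then show ?case by (simp add: ac_simps)
qed simp

theorem proposition2:
  fixes B :: base and ps :: "atom list" and S :: "atom multiset" and q :: atom
  shows "derives B (mset ps + S) q \<longleftrightarrow>
         (\<forall>X :: base. B \<subseteq> X \<longrightarrow>
            (\<forall>Ts :: atom multiset list. length Ts = length ps \<longrightarrow>
               (\<forall>i < length ps. derives X (Ts ! i) (ps ! i)) \<longrightarrow>
               derives X (sum_list Ts + S) q))"
proof (intro iffI allI impI)
  fix X Ts
  assume "derives B (mset ps + S) q" "B \<subseteq> X" "length Ts = length ps"
    and "\<forall>i < length ps. derives X (Ts ! i) (ps ! i)"
  then show "derives X (sum_list Ts + S) q"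
    by (metis derives_mono derives_cut_list list_all2_conv_all_nth)
next
  assume "\<forall>X. B \<subseteq> X \<longrightarrow> (\<forall>Ts. length Ts = length ps \<longrightarrow>
            (\<forall>i < length ps. derives X (Ts ! i) (ps ! i)) \<longrightarrow> derives X (sum_list Ts + S) q)"
  from this[rule_format, of B "map (\<lambda>p. {#p#}) ps"]
  have "derives B (sum_list (map (\<lambda>p. {#p#}) ps) + S) q"
    by (simp add: derives.Ref)
  then show "derives B (mset ps + S) q" by simp
qed

end
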